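(* Let $X,Y$ be complex Banach spaces, $n\in\mathbb N$, let $F:\mathbb R^n\times X\to Y$ be continuous, let $\mathcal B$ be any family of compact subsets of $X$, and let $\mathrm R$ be the collection of all sequences in $\mathbb R^n$. Then $F$ is Bohr $\mathcal B$-almost periodic if and only if $F$ is $(\mathrm R,\mathcal B)$-multi-almost periodic.
   Context: $B(\mathbf t_0,l)$ is the closed Euclidean ball in $\mathbb R^n$. A continuous $F:\mathbb R^n\times X\to Y$ is Bohr $\mathcal B$-almost periodic if for every $B\in\mathcal B$ and $\epsilon>0$ there exists $l>0$ such that for each $\mathbf t_0\in\mathbb R^n$ there exists $\tau\in B(\mathbf t_0,l)$ with $\|F(\mathbf t+\tau;x)-F(\mathbf t;x)\|_Y\le\epsilon$ for all $\mathbf t\in\mathbb R^n$, $x\in B$. It is $(\mathrm R,\mathcal B)$-multi-almost periodic if for every $B\in\mathcal B$ and every sequence $(\mathbf b_k)\in\mathrm R$ there exist a subsequence $(\mathbf b_{k_l})$ and a function $F^\ast:\mathbb R^n\times X\to Y$ with $\lim_{l\to\infty}F(\mathbf t+\mathbf b_{k_l};x)=F^\ast(\mathbf t;x)$ uniformly for $x\in B$, $\mathbf t\in\mathbb R^n$. *)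

theory Defs
  imports "HOL-Analysis.Analysis"
begin

text \<open>Complex normed vector spaces: a real normed vector space with a compatible
  complex scalar multiplication (complex Banach space = this class plus banach).\<close>
class complex_normed_vector = real_normed_vector +
  fixes scaleC :: "complex \<Rightarrow> 'a \<Rightarrow> 'a"
  assumes scaleC_add_right: "scaleC a (x + y) = scaleC a x + scaleC a y"
    and scaleC_add_left: "scaleC (a + b) x = scaleC a x + scaleC b x"
    and scaleC_scaleC: "scaleC a (scaleC b x) = scaleC (a * b) x"
    and scaleC_one: "scaleC 1 x = x"
    and scaleC_of_real: "scaleC (complex_of_real r) x = scaleR r x"
    and norm_scaleC: "norm (scaleC a x) = cmod a * norm x"

text \<open>Bohr \<B>-almost periodicity; B(t0,l) is the closed Euclidean ball cball t0 l.\<close>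
definition bohr_B_almost_periodic ::
  "(real ^ 'n::finite \<Rightarrow> 'x \<Rightarrow> 'y::real_normed_vector) \<Rightarrow> 'x set set \<Rightarrow> bool" where
  "bohr_B_almost_periodic F \<B> \<longleftrightarrow>
     (\<forall>B\<in>\<B>. \<forall>\<epsilon>>0. \<exists>l>0. \<forall>t0. \<exists>\<tau>\<in>cball t0 l.
        \<forall>t. \<forall>x\<in>B. norm (F (t + \<tau>) x - F t x) \<le> \<epsilon>)"

definition R_B_multi_almost_periodic ::
  "(real ^ 'n::finite \<Rightarrow> 'x \<Rightarrow> 'y::real_normed_vector) \<Rightarrow> (nat \<Rightarrow> real ^ 'n) set
     \<Rightarrow> 'x set set \<Rightarrow> bool" where
  "R_B_multi_almost_periodic F R \<B> \<longleftrightarrow>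
     (\<forall>B\<in>\<B>. \<forall>b\<in>R. \<exists>r::nat \<Rightarrow> nat. strict_mono r \<and>
        (\<exists>Fs :: real ^ 'n \<Rightarrow> 'x \<Rightarrow> 'y.
           (\<forall>\<epsilon>>0. \<forall>\<^sub>F l in sequentially.
              \<forall>t. \<forall>x\<in>B. norm (F (t + b (r l)) x - Fs t x) < \<epsilon>)))"

end

theory Submission
  imports Defs
begin

(* Forward direction: for compact B, relatively dense epsilon-almost periods move every point t
   into a fixed ball, and F is uniformly continuous on the compact set (ball x B). Hence F is
   bounded on R^n x B, uniformly continuous in t uniformly for x in B, and the translates
   F(. + s, .) form a totally bounded family for the supremum distance on R^n x B. So every
   sequence of translates has a uniformly Cauchy subsequence, which converges uniformly because
   Y is complete.
   Backward direction: if the epsilon-almost periods are not relatively dense, there are balls of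
   every radius free of them, and these yield points h_k no difference h_j - h_i of which is an
   epsilon-almost period; then no subsequence of the translates by h_k is uniformly Cauchy. *)

definition almost_period ::
  "('a::plus \<Rightarrow> 'x \<Rightarrow> 'y::real_normed_vector) \<Rightarrow> 'x set \<Rightarrow> real \<Rightarrow> 'a \<Rightarrow> bool" where
  "almost_period F B \<epsilon> \<tau> \<longleftrightarrow> (\<forall>t. \<forall>x\<in>B. norm (F (t + \<tau>) x - F t x) \<le> \<epsilon>)"

lemma bohr_B_almost_periodic_iff:
  "bohr_B_almost_periodic F \<B> \<longleftrightarrow>
     (\<forall>B\<in>\<B>. \<forall>\<epsilon>>0. \<exists>l>0. \<forall>t0. \<exists>\<tau>\<in>cball t0 l. almost_period F B \<epsilon> \<tau>)"
  by (simp add: bohr_B_almost_periodic_def almost_period_def)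

lemma almost_period_diff_iff:
  fixes F :: "'a::ab_group_add \<Rightarrow> 'x \<Rightarrow> 'y::real_normed_vector"
  shows "almost_period F B \<epsilon> (s - s') \<longleftrightarrow> (\<forall>t. \<forall>x\<in>B. norm (F (t + s) x - F (t + s') x) \<le> \<epsilon>)"
proof
  assume "almost_period F B \<epsilon> (s - s')"
  then have "norm (F (t + s' + (s - s')) x - F (t + s') x) \<le> \<epsilon>" if "x \<in> B" for t x
    using that unfolding almost_period_def by blast
  then show "\<forall>t. \<forall>x\<in>B. norm (F (t + s) x - F (t + s') x) \<le> \<epsilon>"
    by (simp add: algebra_simps)
next
  assume translates_close: "\<forall>t. \<forall>x\<in>B. norm (F (t + s) x - F (t + s') x) \<le> \<epsilon>"
  show "almost_period F B \<epsilon> (s - s')"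
    unfolding almost_period_def
  proof (intro allI ballI)
    fix t x assume "x \<in> B"
    then have "norm (F (t - s' + s) x - F (t - s' + s') x) \<le> \<epsilon>"
      using translates_close by blast
    then show "norm (F (t + (s - s')) x - F t x) \<le> \<epsilon>"
      by (simp add: algebra_simps)
  qed
qed

lemma bohr_B_almost_periodic_shift_into_ball:
  assumes "bohr_B_almost_periodic F {B}" and "\<epsilon> > 0"
  obtains l where "l > 0" "\<And>t. \<exists>\<tau>. almost_period F B \<epsilon> \<tau> \<and> norm (t + \<tau>) \<le> l"
proof -
  obtain l where "l > 0" and l: "\<And>t0. \<exists>\<tau>\<in>cball t0 l. almost_period F B \<epsilon> \<tau>"
    using assms by (auto simp: bohr_B_almost_periodic_iff)
  have "\<exists>\<tau>. almost_period F B \<epsilon> \<tau> \<and> norm (t + \<tau>) \<le> l" for t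
    using l[of "-t"] by (auto simp: dist_norm norm_minus_commute add.commute)
  with \<open>l > 0\<close> show thesis by (rule that)
qed

lemma bohr_B_almost_periodic_bounded:
  fixes F :: "real ^ 'n::finite \<Rightarrow> 'x::metric_space \<Rightarrow> 'y::real_normed_vector"
  assumes cont: "continuous_on UNIV (\<lambda>(t, x). F t x)"
    and "compact B" and ap: "bohr_B_almost_periodic F {B}"
  shows "bounded ((\<lambda>(t, x). F t x) ` (UNIV \<times> B))"
proof -
  obtain l where l: "\<And>t. \<exists>\<tau>. almost_period F B 1 \<tau> \<and> norm (t + \<tau>) \<le> l"
    using bohr_B_almost_periodic_shift_into_ball[OF ap zero_less_one] by blast
  have "compact ((\<lambda>(t, x). F t x) ` (cball 0 l \<times> B))"
    using \<open>compact B\<close> by (intro compact_continuous_image continuous_on_subset[OF cont])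
      (auto intro: compact_Times)
  then obtain C where C: "\<forall>y\<in>(\<lambda>(t, x). F t x) ` (cball 0 l \<times> B). norm y \<le> C"
    using compact_imp_bounded bounded_iff by blast
  have "norm (F t x) \<le> C + 1" if "x \<in> B" for t x
  proof -
    obtain \<tau> where "almost_period F B 1 \<tau>" "norm (t + \<tau>) \<le> l"
      using l by blast
    then have "norm (F (t + \<tau>) x) \<le> C" "norm (F t x - F (t + \<tau>) x) \<le> 1"
      using C \<open>x \<in> B\<close> by (auto simp: almost_period_def norm_minus_commute)
    then show ?thesis
      using norm_triangle_ineq2[of "F t x" "F (t + \<tau>) x"] by simp
  qed
  then show ?thesis
    unfolding bounded_iff by (intro exI[of _ "C + 1"]) auto
qed

lemma bohr_B_almost_periodic_uniformly_continuous:
  fixes F :: "real ^ 'n::finite \<Rightarrow> 'x::metric_space \<Rightarrow> 'y::real_normed_vector"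
  assumes cont: "continuous_on UNIV (\<lambda>(t, x). F t x)"
    and "compact B" and ap: "bohr_B_almost_periodic F {B}" and "e > 0"
  obtains \<delta> where "\<delta> > 0" "\<And>t t' x. x \<in> B \<Longrightarrow> dist t t' < \<delta> \<Longrightarrow> norm (F t x - F t' x) \<le> e"
proof -
  have "e/3 > 0" using \<open>e > 0\<close> by simp
  (* a common almost period moves t and t' into cball 0 (l + 1), where F is uniformly continuous *)
  obtain l where l: "\<And>t. \<exists>\<tau>. almost_period F B (e/3) \<tau> \<and> norm (t + \<tau>) \<le> l"
    using bohr_B_almost_periodic_shift_into_ball[OF ap \<open>e/3 > 0\<close>] by blast
  let ?K = "cball 0 (l + 1) \<times> B"
  have "uniformly_continuous_on ?K (\<lambda>(t, x). F t x)"
    using \<open>compact B\<close> by (intro compact_uniformly_continuous continuous_on_subset[OF cont])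
      (auto intro: compact_Times)
  then obtain d where "d > 0" and d: "\<forall>z\<in>?K. \<forall>z'\<in>?K. dist z' z < d \<longrightarrow>
      dist ((\<lambda>(t, x). F t x) z') ((\<lambda>(t, x). F t x) z) < e/3"
    unfolding uniformly_continuous_on_def using \<open>e/3 > 0\<close> by blast
  have "norm (F t x - F t' x) \<le> e" if "x \<in> B" and tt': "dist t t' < min d 1" for t t' x
  proof -
    obtain \<tau> where \<tau>: "almost_period F B (e/3) \<tau>" and "norm (t + \<tau>) \<le> l"
      using l by blast
    have "norm (t' + \<tau>) \<le> norm (t + \<tau>) + norm (t' - t)"
      using norm_triangle_ineq[of "t + \<tau>" "t' - t"] by (simp add: add.commute)
    also have "norm (t' - t) = dist t t'"
      by (simp add: dist_norm norm_minus_commute)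
    finally have "(t + \<tau>, x) \<in> ?K" "(t' + \<tau>, x) \<in> ?K"
      using \<open>norm (t + \<tau>) \<le> l\<close> \<open>x \<in> B\<close> tt' by auto
    moreover have "dist (t + \<tau>, x) (t' + \<tau>, x) < d"
      using tt' by (simp add: dist_Pair_Pair dist_norm)
    ultimately have "dist ((\<lambda>(t, x). F t x) (t + \<tau>, x)) ((\<lambda>(t, x). F t x) (t' + \<tau>, x)) < e/3"
      using d by blast
    then have "norm (F (t + \<tau>) x - F (t' + \<tau>) x) \<le> e/3"
      by (simp add: dist_norm)
    moreover have "norm (F t x - F (t + \<tau>) x) \<le> e/3" "norm (F (t' + \<tau>) x - F t' x) \<le> e/3"
      using \<tau> \<open>x \<in> B\<close> by (auto simp: almost_period_def norm_minus_commute)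
    ultimately have "norm (F t x - F t' x) \<le> e/3 + e/3 + e/3"
      using norm_diff_triangle_le by blast
    then show ?thesis by simp
  qed
  moreover have "min d 1 > 0" using \<open>d > 0\<close> by simp
  ultimately show thesis using that by blast
qed

lemma bohr_B_almost_periodic_finite_net:
  fixes F :: "real ^ 'n::finite \<Rightarrow> 'x::metric_space \<Rightarrow> 'y::real_normed_vector"
  assumes cont: "continuous_on UNIV (\<lambda>(t, x). F t x)"
    and "compact B" and ap: "bohr_B_almost_periodic F {B}" and "e > 0"
  obtains K where "finite K" "\<And>s. \<exists>s'\<in>K. almost_period F B e (s - s')"
proof -
  obtain \<delta> where "\<delta> > 0" and \<delta>: "\<And>t t' x. x \<in> B \<Longrightarrow> dist t t' < \<delta> \<Longrightarrow> norm (F t x - F t' x) \<le> e/2"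
    using bohr_B_almost_periodic_uniformly_continuous[OF cont \<open>compact B\<close> ap half_gt_zero[OF \<open>e > 0\<close>]]
    by blast
  obtain l where l: "\<And>t. \<exists>\<tau>. almost_period F B (e/2) \<tau> \<and> norm (t + \<tau>) \<le> l"
    using bohr_B_almost_periodic_shift_into_ball[OF ap half_gt_zero[OF \<open>e > 0\<close>]] by blast
  obtain K where "finite K" and K: "cball (0 :: real ^ 'n) l \<subseteq> (\<Union>c\<in>K. ball c \<delta>)"
    using compact_eq_totally_bounded[THEN iffD1, OF compact_cball, THEN conjunct2,
        rule_format, OF \<open>\<delta> > 0\<close>]
    by blast
  have "\<exists>s'\<in>K. almost_period F B e (s - s')" for s
  proof -
    obtain \<tau> where \<tau>: "almost_period F B (e/2) \<tau>" and "norm (s + \<tau>) \<le> l"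
      using l by blast
    then have "s + \<tau> \<in> cball 0 l" by simp
    then obtain s' where "s' \<in> K" and "s + \<tau> \<in> ball s' \<delta>"
      using K by blast
    then have s': "dist s' (s + \<tau>) < \<delta>" by simp
    have "norm (F (t + s) x - F (t + s') x) \<le> e" if "x \<in> B" for t x
    proof -
      have "norm (F (t + s + \<tau>) x - F (t + s) x) \<le> e/2"
        using \<tau> \<open>x \<in> B\<close> unfolding almost_period_def by blast
      then have "norm (F (t + s) x - F (t + s + \<tau>) x) \<le> e/2"
        by (simp add: norm_minus_commute)
      moreover have "dist (t + s + \<tau>) (t + s') < \<delta>"
        using s' by (simp add: dist_norm norm_minus_commute algebra_simps)
      then have "norm (F (t + s + \<tau>) x - F (t + s') x) \<le> e/2"
        using \<delta> \<open>x \<in> B\<close> by blast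
      ultimately have "norm (F (t + s) x - F (t + s') x) \<le> e/2 + e/2"
        by (rule norm_diff_triangle_le)
      then show ?thesis by simp
    qed
    with \<open>s' \<in> K\<close> show ?thesis by (auto simp: almost_period_diff_iff)
  qed
  with \<open>finite K\<close> show thesis by (rule that)
qed

lemma finite_nets_imp_uniformly_Cauchy_subseq:
  fixes f :: "'i \<Rightarrow> 'a \<Rightarrow> 'b::metric_space" and \<sigma> :: "nat \<Rightarrow> 'i"
  assumes f_bounded: "\<And>i. bounded (f i ` S)"
    and nets: "\<And>e. e > 0 \<Longrightarrow> \<exists>K. finite K \<and> (\<forall>i. \<exists>k\<in>K. \<forall>z\<in>S. dist (f i z) (f k z) \<le> e)"
  shows "\<exists>r. strict_mono r \<and> uniformly_Cauchy_on S (\<lambda>n. f (\<sigma> (r n)))"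
proof (cases "S = {}")
  case True
  then show ?thesis
    by (intro exI[of _ id]) (simp add: strict_mono_def uniformly_Cauchy_on_def)
next
  case False
  interpret FS: Metric_space "Met_TC.fspace S" "Met_TC.fdist S"
    by (rule Met_TC.Metric_space_funspace)
  define g where "g i = restrict (f i) S" for i
  have g_in: "g i \<in> Met_TC.fspace S" for i
    using f_bounded by (simp add: Met_TC.fspace_def g_def)
  have fdist_le: "Met_TC.fdist S (g i) (g j) \<le> a \<longleftrightarrow> (\<forall>z\<in>S. dist (f i z) (f j z) \<le> a)" for i j a
    using Met_TC.funspace_mdist_le[OF g_in g_in False] by (simp add: g_def)
  have "FS.mtotally_bounded (range g)"
    unfolding FS.mtotally_bounded_def
  proof (intro allI impI)
    fix e :: real assume "e > 0"
    then obtain K where "finite K" and K: "\<forall>i. \<exists>k\<in>K. \<forall>z\<in>S. dist (f i z) (f k z) \<le> e/2"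
      using nets[of "e/2"] by auto
    have "g i \<in> FS.mball (g k) e" if "\<forall>z\<in>S. dist (f i z) (f k z) \<le> e/2" for i k
    proof -
      have "Met_TC.fdist S (g k) (g i) \<le> e/2"
        unfolding fdist_le using that by (simp add: dist_commute)
      with \<open>e > 0\<close> g_in show ?thesis by simp
    qed
    with K have "range g \<subseteq> (\<Union>k\<in>g ` K. FS.mball k e)" by blast
    with \<open>finite K\<close> show "\<exists>K. finite K \<and> K \<subseteq> range g \<and> range g \<subseteq> (\<Union>k\<in>K. FS.mball k e)"
      by (intro exI[of _ "g ` K"]) auto
  qed
  moreover have "range (g \<circ> \<sigma>) \<subseteq> range g" by auto
  ultimately obtain r where "strict_mono r" and Cauchy: "FS.MCauchy (g \<circ> \<sigma> \<circ> r)"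
    unfolding FS.mtotally_bounded_sequentially by blast
  have "uniformly_Cauchy_on S (\<lambda>n. f (\<sigma> (r n)))"
    unfolding uniformly_Cauchy_on_def
  proof (intro allI impI)
    fix e :: real assume "e > 0"
    have "\<forall>\<epsilon>>0. \<exists>N. \<forall>m\<ge>N. \<forall>n\<ge>N. Met_TC.fdist S (g (\<sigma> (r m))) (g (\<sigma> (r n))) < \<epsilon>"
      using Cauchy unfolding FS.MCauchy_def by simp
    then obtain N where N: "\<And>m n. N \<le> m \<Longrightarrow> N \<le> n \<Longrightarrow> Met_TC.fdist S (g (\<sigma> (r m))) (g (\<sigma> (r n))) < e"
      using \<open>e > 0\<close> by blast
    have "dist (f (\<sigma> (r m)) z) (f (\<sigma> (r n)) z) < e" if "N \<le> m" "N \<le> n" "z \<in> S" for m n z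
    proof -
      have "dist (f (\<sigma> (r m)) z) (f (\<sigma> (r n)) z) \<le> Met_TC.fdist S (g (\<sigma> (r m))) (g (\<sigma> (r n)))"
        using fdist_le[THEN iffD1, OF order_refl] \<open>z \<in> S\<close> by blast
      also have "\<dots> < e"
        using N[OF that(1,2)] .
      finally show ?thesis .
    qed
    then show "\<exists>M. \<forall>z\<in>S. \<forall>m\<ge>M. \<forall>n\<ge>M. dist (f (\<sigma> (r m)) z) (f (\<sigma> (r n)) z) < e"
      by blast
  qed
  with \<open>strict_mono r\<close> show ?thesis by blast
qed

lemma bohr_B_almost_periodic_imp_uniformly_Cauchy_translates:
  fixes F :: "real ^ 'n::finite \<Rightarrow> 'x::metric_space \<Rightarrow> 'y::real_normed_vector"
    and b :: "nat \<Rightarrow> real ^ 'n"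
  assumes cont: "continuous_on UNIV (\<lambda>(t, x). F t x)"
    and "compact B" and ap: "bohr_B_almost_periodic F {B}"
  shows "\<exists>r. strict_mono r \<and> uniformly_Cauchy_on (UNIV \<times> B) (\<lambda>k (t, x). F (t + b (r k)) x)"
proof -
  let ?f = "\<lambda>s (t, x). F (t + s) x"
  have "?f s ` (UNIV \<times> B) \<subseteq> (\<lambda>(t, x). F t x) ` (UNIV \<times> B)" for s
  proof (rule image_subsetI)
    fix z :: "(real ^ 'n) \<times> 'x" assume "z \<in> UNIV \<times> B"
    then show "?f s z \<in> (\<lambda>(t, x). F t x) ` (UNIV \<times> B)"
      by (intro rev_image_eqI[of "(fst z + s, snd z)"]) (auto simp: case_prod_beta)
  qed
  then have translates_bounded: "bounded (?f s ` (UNIV \<times> B))" for s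
    using bohr_B_almost_periodic_bounded[OF cont \<open>compact B\<close> ap] bounded_subset by blast
  have translates_nets: "\<exists>K. finite K \<and> (\<forall>s. \<exists>s'\<in>K. \<forall>z\<in>UNIV \<times> B. dist (?f s z) (?f s' z) \<le> e)"
    if "e > 0" for e
  proof -
    obtain K where "finite K" and K: "\<And>s. \<exists>s'\<in>K. almost_period F B e (s - s')"
      using bohr_B_almost_periodic_finite_net[OF cont \<open>compact B\<close> ap \<open>e > 0\<close>] by blast
    have close: "\<forall>z\<in>UNIV \<times> B. dist (?f s z) (?f s' z) \<le> e"
      if "almost_period F B e (s - s')" for s s'
    proof
      fix z :: "(real ^ 'n) \<times> 'x" assume "z \<in> UNIV \<times> B"
      with that show "dist (?f s z) (?f s' z) \<le> e"
        by (cases z) (simp add: almost_period_diff_iff dist_norm)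
    qed
    show ?thesis
    proof (intro exI[of _ K] conjI allI)
      fix s
      obtain s' where "s' \<in> K" and "almost_period F B e (s - s')"
        using K by blast
      from close[OF this(2)] \<open>s' \<in> K\<close>
      show "\<exists>s'\<in>K. \<forall>z\<in>UNIV \<times> B. dist (?f s z) (?f s' z) \<le> e"
        by (rule bexI)
    qed fact
  qed
  show ?thesis
    using finite_nets_imp_uniformly_Cauchy_subseq[of ?f "UNIV \<times> B", OF translates_bounded translates_nets] .
qed

lemma seq_with_differences_avoiding:
  fixes P :: "'a::real_normed_vector set"
  assumes "\<And>l. l > 0 \<Longrightarrow> \<exists>c. cball c l \<inter> P = {}"
  obtains h :: "nat \<Rightarrow> 'a" where "\<And>i j. i < j \<Longrightarrow> h j - h i \<notin> P"
proof -
  have step: "\<exists>y L'. L \<le> L' \<and> norm y \<le> L' \<and> (\<forall>z. norm z \<le> L \<longrightarrow> y - z \<notin> P)" if "L > 0" for L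
  proof -
    obtain c where c: "cball c L \<inter> P = {}"
      using assms \<open>L > 0\<close> by blast
    have "c - z \<notin> P" if "norm z \<le> L" for z
    proof -
      have "c - z \<in> cball c L" using that by (simp add: dist_norm)
      with c show ?thesis by blast
    qed
    then show ?thesis by (intro exI[of _ c] exI[of _ "max L (norm c)"]) auto
  qed
  (* the state p = (h_k, L_k) carries a radius L_k bounding the norms of h_0, ..., h_k *)
  have init: "\<exists>p. norm (fst p) \<le> snd p \<and> snd p > 0"
    by (intro exI[of _ "(0, 1)"]) simp
  have "\<exists>q. (norm (fst q) \<le> snd q \<and> snd q > 0) \<and>
      snd p \<le> snd q \<and> (\<forall>z. norm z \<le> snd p \<longrightarrow> fst q - z \<notin> P)"
    if p: "norm (fst p) \<le> snd p \<and> snd p > 0" for p :: "'a \<times> real"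
  proof -
    obtain y L' where "snd p \<le> L'" "norm y \<le> L'" "\<forall>z. norm z \<le> snd p \<longrightarrow> y - z \<notin> P"
      using step[of "snd p"] p by blast
    with p show ?thesis by (intro exI[of _ "(y, L')"]) auto
  qed
  then obtain f :: "nat \<Rightarrow> 'a \<times> real" where f: "\<forall>n. (norm (fst (f n)) \<le> snd (f n) \<and> snd (f n) > 0) \<and>
      snd (f n) \<le> snd (f (Suc n)) \<and> (\<forall>z. norm z \<le> snd (f n) \<longrightarrow> fst (f (Suc n)) - z \<notin> P)"
    using dependent_nat_choice[of "\<lambda>_ p. norm (fst p) \<le> snd p \<and> snd p > 0"
      "\<lambda>_ p q. snd p \<le> snd q \<and> (\<forall>z. norm z \<le> snd p \<longrightarrow> fst q - z \<notin> P)", OF init]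
    by blast
  have "fst (f j) - fst (f i) \<notin> P" if "i < j" for i j
  proof -
    from \<open>i < j\<close> obtain k where k: "j = Suc k" by (cases j) auto
    with \<open>i < j\<close> have "i \<le> k" by simp
    then have "snd (f i) \<le> snd (f k)"
      using lift_Suc_mono_le[of "\<lambda>n. snd (f n)"] f by blast
    moreover have "norm (fst (f i)) \<le> snd (f i)" using f by blast
    ultimately have "norm (fst (f i)) \<le> snd (f k)" by linarith
    then show ?thesis using f k by blast
  qed
  then show thesis by (rule that)
qed

lemma uniformly_Cauchy_translates_imp_bohr_B_almost_periodic:
  fixes F :: "real ^ 'n::finite \<Rightarrow> 'x \<Rightarrow> 'y::real_normed_vector"
  assumes "\<And>b :: nat \<Rightarrow> real ^ 'n. \<exists>r. strict_mono r \<and>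
      uniformly_Cauchy_on (UNIV \<times> B) (\<lambda>k (t, x). F (t + b (r k)) x)"
  shows "bohr_B_almost_periodic F {B}"
proof -
  have "\<exists>l>0. \<forall>t0. \<exists>\<tau>\<in>cball t0 l. almost_period F B \<epsilon> \<tau>" if "\<epsilon> > 0" for \<epsilon>
  proof (rule ccontr)
    assume "\<not> (\<exists>l>0. \<forall>t0. \<exists>\<tau>\<in>cball t0 l. almost_period F B \<epsilon> \<tau>)"
    then have "\<exists>c. cball c l \<inter> Collect (almost_period F B \<epsilon>) = {}" if "l > 0" for l
      using that by blast
    then obtain h :: "nat \<Rightarrow> real ^ 'n"
      where h: "\<And>i j. i < j \<Longrightarrow> h j - h i \<notin> Collect (almost_period F B \<epsilon>)"
      using seq_with_differences_avoiding[of "Collect (almost_period F B \<epsilon>)"] by blast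
    obtain r where "strict_mono r"
      and "uniformly_Cauchy_on (UNIV \<times> B) (\<lambda>k (t, x). F (t + h (r k)) x)"
      using assms by blast
    then obtain N where N: "\<forall>z\<in>UNIV \<times> B. \<forall>m\<ge>N. \<forall>n\<ge>N.
        dist ((\<lambda>(t, x). F (t + h (r m)) x) z) ((\<lambda>(t, x). F (t + h (r n)) x) z) < \<epsilon>"
      unfolding uniformly_Cauchy_on_def using \<open>\<epsilon> > 0\<close> by blast
    have "norm (F (t + h (r (Suc N))) x - F (t + h (r N)) x) \<le> \<epsilon>" if "x \<in> B" for t x
      using N[rule_format, of "(t, x)" "Suc N" N] that by (simp add: dist_norm)
    then have "almost_period F B \<epsilon> (h (r (Suc N)) - h (r N))"
      by (simp add: almost_period_diff_iff)
    moreover have "r N < r (Suc N)"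
      using \<open>strict_mono r\<close> by (simp add: strict_mono_def)
    ultimately show False using h by blast
  qed
  then show ?thesis by (simp add: bohr_B_almost_periodic_iff)
qed

lemma bohr_B_almost_periodic_iff_uniformly_Cauchy_translates:
  fixes F :: "real ^ 'n::finite \<Rightarrow> 'x::metric_space \<Rightarrow> 'y::real_normed_vector"
  assumes "continuous_on UNIV (\<lambda>(t, x). F t x)" and "compact B"
  shows "bohr_B_almost_periodic F {B} \<longleftrightarrow> (\<forall>b :: nat \<Rightarrow> real ^ 'n. \<exists>r. strict_mono r \<and>
      uniformly_Cauchy_on (UNIV \<times> B) (\<lambda>k (t, x). F (t + b (r k)) x))"
  using bohr_B_almost_periodic_imp_uniformly_Cauchy_translates[OF assms]
    uniformly_Cauchy_translates_imp_bohr_B_almost_periodic by blast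

lemma uniformly_convergent_on_curried_iff:
  fixes f :: "nat \<Rightarrow> 'a \<Rightarrow> 'b \<Rightarrow> 'c::metric_space"
  shows "uniformly_convergent_on (UNIV \<times> B) (\<lambda>k (t, x). f k t x) \<longleftrightarrow>
    (\<exists>g. \<forall>\<epsilon>>0. \<forall>\<^sub>F k in sequentially. \<forall>t. \<forall>x\<in>B. dist (f k t x) (g t x) < \<epsilon>)"
  unfolding uniformly_convergent_on_def uniform_limit_iff
proof
  assume "\<exists>l. \<forall>\<epsilon>>0. \<forall>\<^sub>F k in sequentially. \<forall>z\<in>UNIV \<times> B. dist ((\<lambda>(t, x). f k t x) z) (l z) < \<epsilon>"
  then obtain l where "\<forall>\<epsilon>>0. \<forall>\<^sub>F k in sequentially. \<forall>z\<in>UNIV \<times> B. dist ((\<lambda>(t, x). f k t x) z) (l z) < \<epsilon>" ..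
  then show "\<exists>g. \<forall>\<epsilon>>0. \<forall>\<^sub>F k in sequentially. \<forall>t. \<forall>x\<in>B. dist (f k t x) (g t x) < \<epsilon>"
    by (intro exI[of _ "\<lambda>t x. l (t, x)"]) auto
next
  assume "\<exists>g. \<forall>\<epsilon>>0. \<forall>\<^sub>F k in sequentially. \<forall>t. \<forall>x\<in>B. dist (f k t x) (g t x) < \<epsilon>"
  then obtain g where "\<forall>\<epsilon>>0. \<forall>\<^sub>F k in sequentially. \<forall>t. \<forall>x\<in>B. dist (f k t x) (g t x) < \<epsilon>" ..
  then show "\<exists>l. \<forall>\<epsilon>>0. \<forall>\<^sub>F k in sequentially. \<forall>z\<in>UNIV \<times> B. dist ((\<lambda>(t, x). f k t x) z) (l z) < \<epsilon>"
    by (intro exI[of _ "\<lambda>(t, x). g t x"]) auto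
qed

lemma R_B_multi_almost_periodic_iff_uniformly_convergent:
  "R_B_multi_almost_periodic F R \<B> \<longleftrightarrow> (\<forall>B\<in>\<B>. \<forall>b\<in>R. \<exists>r. strict_mono r \<and>
      uniformly_convergent_on (UNIV \<times> B) (\<lambda>k (t, x). F (t + b (r k)) x))"
  by (simp add: R_B_multi_almost_periodic_def uniformly_convergent_on_curried_iff dist_norm)

theorem theorem2p17:
  fixes F :: "real ^ 'n::finite \<Rightarrow> 'x::{complex_normed_vector,banach} \<Rightarrow> 'y::{complex_normed_vector,banach}"
    and \<B> :: "'x set set"
  assumes "continuous_on UNIV (\<lambda>(t, x). F t x)"
    and "\<forall>B\<in>\<B>. compact B"
  shows "bohr_B_almost_periodic F \<B> \<longleftrightarrow> R_B_multi_almost_periodic F UNIV \<B>"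
proof -
  have "bohr_B_almost_periodic F \<B> \<longleftrightarrow> (\<forall>B\<in>\<B>. bohr_B_almost_periodic F {B})"
    by (simp add: bohr_B_almost_periodic_def)
  also have "\<dots> \<longleftrightarrow> (\<forall>B\<in>\<B>. \<forall>b :: nat \<Rightarrow> real ^ 'n. \<exists>r. strict_mono r \<and>
      uniformly_Cauchy_on (UNIV \<times> B) (\<lambda>k (t, x). F (t + b (r k)) x))"
    using bohr_B_almost_periodic_iff_uniformly_Cauchy_translates assms by blast
  also have "\<dots> \<longleftrightarrow> R_B_multi_almost_periodic F UNIV \<B>"
    by (simp add: R_B_multi_almost_periodic_iff_uniformly_convergent uniformly_convergent_eq_Cauchy)
  finally show ?thesis .
qed

end
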